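(* Let $A\in\mathbb{R}^{m\times n}_+$ with every row containing a positive entry, $r\in\mathbb{R}^m_{+}$, $c\in\mathbb{R}^n_+$, $y\in\mathbb{R}^n_{++}$, let $T\subseteq[n]$ have margin $\gamma$, and let $h:=h^{A,r,y}_T$. Then for any $\alpha$ satisfying $0\le h(\alpha)-h(1)\le\gamma$, the scaling $y':=y\circ(1_{\bar T}+\alpha1_T)$ satisfies \[\|c^{A,r}(y)-c\|_2^2-\|c^{A,r}(y')-c\|_2^2\ge2\gamma(h(\alpha)-h(1)).\]
   Context: $c^{A,r}_j(y):=\sum_{i\in[m]}r_i\frac{A_{ij}y_j}{\sum_{k\in[n]}A_{ik}y_k}$. $\bar T=[n]\setminus T$, $1_T$ the indicator of $T$, $\circ$ the entrywise product. Margin of $T$: the largest $\gamma\ge0$ such that some $\nu\in\mathbb{R}$ satisfies $\max_{j\in T}(c^{A,r}_j(y)-c_j)\le\nu-\gamma\le\nu+\gamma\le\min_{j\notin T}(c^{A,r}_j(y)-c_j)$. Proxy function: $h^{A,r,y}_T(\alpha):=\sum_{j\in T}c^{A,r}_j(y\circ(1_{\bar T}+\alpha1_T))$, $\alpha>0$. *)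

theory Defs
  imports "HOL-Analysis.Analysis"
begin

text \<open>Matrices A in R^{m x n} are functions nat => nat => real (entries A i j, i < m, j < n);
vectors are functions nat => real restricted to the index range. Indices are 0-based:
[m] = {..<m}, [n] = {..<n}.\<close>

definition cAr :: "nat \<Rightarrow> nat \<Rightarrow> (nat \<Rightarrow> nat \<Rightarrow> real) \<Rightarrow> (nat \<Rightarrow> real) \<Rightarrow> (nat \<Rightarrow> real) \<Rightarrow> nat \<Rightarrow> real" where
  "cAr m n A r y j = (\<Sum>i<m. r i * (A i j * y j) / (\<Sum>k<n. A i k * y k))"

definition margin_feasible :: "nat \<Rightarrow> nat \<Rightarrow> (nat \<Rightarrow> nat \<Rightarrow> real) \<Rightarrow> (nat \<Rightarrow> real) \<Rightarrow> (nat \<Rightarrow> real)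
    \<Rightarrow> (nat \<Rightarrow> real) \<Rightarrow> nat set \<Rightarrow> real \<Rightarrow> bool" where
  "margin_feasible m n A r c y T \<gamma> \<longleftrightarrow> \<gamma> \<ge> 0 \<and>
     (\<exists>\<nu>::real. (\<forall>j\<in>T. cAr m n A r y j - c j \<le> \<nu> - \<gamma>) \<and>
                (\<forall>j\<in>{..<n} - T. \<nu> + \<gamma> \<le> cAr m n A r y j - c j))"

definition is_margin :: "nat \<Rightarrow> nat \<Rightarrow> (nat \<Rightarrow> nat \<Rightarrow> real) \<Rightarrow> (nat \<Rightarrow> real) \<Rightarrow> (nat \<Rightarrow> real)
    \<Rightarrow> (nat \<Rightarrow> real) \<Rightarrow> nat set \<Rightarrow> real \<Rightarrow> bool" where
  "is_margin m n A r c y T \<gamma> \<longleftrightarrow> margin_feasible m n A r c y T \<gamma> \<and>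
     (\<forall>\<gamma>'. margin_feasible m n A r c y T \<gamma>' \<longrightarrow> \<gamma>' \<le> \<gamma>)"

definition scaleT :: "nat set \<Rightarrow> real \<Rightarrow> (nat \<Rightarrow> real) \<Rightarrow> nat \<Rightarrow> real" where
  "scaleT T \<alpha> y j = y j * (if j \<in> T then \<alpha> else 1)"

definition proxy_h :: "nat \<Rightarrow> nat \<Rightarrow> (nat \<Rightarrow> nat \<Rightarrow> real) \<Rightarrow> (nat \<Rightarrow> real) \<Rightarrow> (nat \<Rightarrow> real)
    \<Rightarrow> nat set \<Rightarrow> real \<Rightarrow> real" where
  "proxy_h m n A r y T \<alpha> = (\<Sum>j\<in>T. cAr m n A r (scaleT T \<alpha> y) j)"

end

theory Submission
  imports Defs
begin

text \<open>Write \<open>x := c(y) - c\<close> and \<open>d := c(y') - c(y)\<close>. Each row \<open>i\<close> distributes exactly \<open>r\<^sub>i\<close>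
  over the columns, so \<open>\<Sum>\<^sub>j d\<^sub>j = 0\<close>; and scaling the coordinates in \<open>T\<close> by \<open>\<alpha> \<ge> 1\<close> raises \<open>c\<^sub>j\<close>
  for \<open>j \<in> T\<close> and lowers it for \<open>j \<notin> T\<close> (for \<open>\<alpha> < 1\<close> the signs reverse, and then \<open>h(\<alpha>) \<ge> h(1)\<close>
  forces \<open>d = 0\<close>). So \<open>d\<close> moves \<open>\<delta> := h(\<alpha>) - h(1)\<close> units of mass from the complement of \<open>T\<close>,
  where \<open>x\<close> exceeds \<open>\<nu> + \<gamma>\<close>, into \<open>T\<close>, where \<open>x\<close> is below \<open>\<nu> - \<gamma>\<close>. This lowers the linear part
  \<open>2 \<Sum> x d\<close> of the change of \<open>\<Sum> x\<^sup>2\<close> by at least \<open>4\<gamma>\<delta>\<close>, while the quadratic part \<open>\<Sum> d\<^sup>2\<close> is at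
  most \<open>2\<delta>\<^sup>2 \<le> 2\<gamma>\<delta>\<close>.\<close>

lemma sum_power2_le_power2_sum:
  fixes d :: "'a \<Rightarrow> real"
  assumes "finite S" and "\<And>j. j \<in> S \<Longrightarrow> 0 \<le> d j"
  shows "(\<Sum>j\<in>S. (d j)\<^sup>2) \<le> (sum d S)\<^sup>2"
proof -
  have "(\<Sum>j\<in>S. (d j)\<^sup>2) \<le> (\<Sum>j\<in>S. d j * sum d S)"
  proof (rule sum_mono)
    fix j assume "j \<in> S"
    then have "d j \<le> sum d S"
      using assms by (intro member_le_sum) auto
    with \<open>j \<in> S\<close> assms(2) show "(d j)\<^sup>2 \<le> d j * sum d S"
      by (simp add: power2_eq_square mult_left_mono)
  qed
  also have "\<dots> = (sum d S)\<^sup>2"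
    by (simp add: power2_eq_square sum_distrib_right)
  finally show ?thesis .
qed

lemma sum_power2_decrease_by_margin:
  fixes x d :: "'a \<Rightarrow> real"
  assumes "finite I" and "T \<subseteq> I"
    and x_T: "\<And>j. j \<in> T \<Longrightarrow> x j \<le> \<nu> - \<gamma>"
    and x_not_T: "\<And>j. j \<in> I - T \<Longrightarrow> \<nu> + \<gamma> \<le> x j"
    and d_T: "\<And>j. j \<in> T \<Longrightarrow> 0 \<le> d j"
    and d_not_T: "\<And>j. j \<in> I - T \<Longrightarrow> d j \<le> 0"
    and sum_d: "sum d I = 0"
    and \<delta>_nonneg: "0 \<le> sum d T" and \<delta>_le: "sum d T \<le> \<gamma>"
  shows "(\<Sum>j\<in>I. (x j)\<^sup>2) - (\<Sum>j\<in>I. (x j + d j)\<^sup>2) \<ge> 2 * \<gamma> * sum d T"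
proof -
  define \<delta> where "\<delta> = sum d T"
  have split: "sum f I = sum f T + sum f (I - T)" for f :: "'a \<Rightarrow> real"
    using assms(1,2) by (metis sum.subset_diff add.commute)
  have finite_T: "finite T"
    using assms(1,2) finite_subset by blast
  have sum_d_not_T: "sum d (I - T) = - \<delta>"
    using split[of d] sum_d by (simp add: \<delta>_def)
  have "(\<Sum>j\<in>T. x j * d j) \<le> (\<Sum>j\<in>T. (\<nu> - \<gamma>) * d j)"
    using x_T d_T by (intro sum_mono mult_right_mono) auto
  also have "\<dots> = (\<nu> - \<gamma>) * \<delta>"
    by (simp add: \<delta>_def sum_distrib_left)
  finally have cross_T: "(\<Sum>j\<in>T. x j * d j) \<le> (\<nu> - \<gamma>) * \<delta>" .
  have "(\<Sum>j\<in>I - T. x j * d j) \<le> (\<Sum>j\<in>I - T. (\<nu> + \<gamma>) * d j)"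
    using x_not_T d_not_T by (intro sum_mono mult_right_mono_neg) auto
  also have "\<dots> = - ((\<nu> + \<gamma>) * \<delta>)"
    by (simp add: sum_d_not_T flip: sum_distrib_left)
  finally have cross: "(\<Sum>j\<in>I. x j * d j) \<le> - 2 * \<gamma> * \<delta>"
    using cross_T split[of "\<lambda>j. x j * d j"] by (simp add: algebra_simps)
  have "(\<Sum>j\<in>T. (d j)\<^sup>2) \<le> \<delta>\<^sup>2"
    unfolding \<delta>_def using finite_T d_T by (rule sum_power2_le_power2_sum)
  moreover have "(\<Sum>j\<in>I - T. (- d j)\<^sup>2) \<le> \<delta>\<^sup>2"
    using sum_power2_le_power2_sum[of "I - T" "\<lambda>j. - d j"] assms(1) d_not_T
    by (simp add: sum_negf sum_d_not_T)
  ultimately have quadratic: "(\<Sum>j\<in>I. (d j)\<^sup>2) \<le> 2 * \<delta>\<^sup>2"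
    using split[of "\<lambda>j. (d j)\<^sup>2"] by simp
  have "(\<Sum>j\<in>I. (x j)\<^sup>2) - (\<Sum>j\<in>I. (x j + d j)\<^sup>2)
      = - 2 * (\<Sum>j\<in>I. x j * d j) - (\<Sum>j\<in>I. (d j)\<^sup>2)"
    by (simp add: power2_sum sum.distrib sum_distrib_left sum_negf algebra_simps)
  also have "\<dots> \<ge> 4 * \<gamma> * \<delta> - 2 * \<delta>\<^sup>2"
    using cross quadratic by linarith
  also have "4 * \<gamma> * \<delta> - 2 * \<delta>\<^sup>2 \<ge> 2 * \<gamma> * \<delta>"
    using mult_right_mono[OF \<delta>_le \<delta>_nonneg] by (simp add: \<delta>_def power2_eq_square)
  finally show ?thesis
    by (simp add: \<delta>_def)
qed

lemma row_sum_pos: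
  fixes A :: "nat \<Rightarrow> nat \<Rightarrow> real"
  assumes A_nonneg: "\<forall>i<m. \<forall>j<n. A i j \<ge> 0"
    and A_rows: "\<forall>i<m. \<exists>j<n. A i j > 0"
    and z_pos: "\<forall>j<n. z j > 0" and "i < m"
  shows "0 < (\<Sum>k<n. A i k * z k)"
proof -
  obtain j where "j < n" "A i j > 0"
    using A_rows \<open>i < m\<close> by blast
  then show ?thesis
    using A_nonneg z_pos \<open>i < m\<close> by (intro sum_pos2[of _ j]) (auto simp: less_imp_le)
qed

lemma sum_cAr:
  assumes A_nonneg: "\<forall>i<m. \<forall>j<n. A i j \<ge> 0"
    and A_rows: "\<forall>i<m. \<exists>j<n. A i j > 0"
    and z_pos: "\<forall>j<n. z j > 0"
  shows "(\<Sum>j<n. cAr m n A r z j) = (\<Sum>i<m. r i)"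
proof -
  have "(\<Sum>j<n. cAr m n A r z j) = (\<Sum>i<m. r i * (\<Sum>j<n. A i j * z j) / (\<Sum>k<n. A i k * z k))"
    unfolding cAr_def
    by (subst sum.swap) (simp add: sum_divide_distrib[symmetric] sum_distrib_left[symmetric])
  also have "\<dots> = (\<Sum>i<m. r i)"
    by (intro sum.cong refl) (simp add: row_sum_pos[OF A_nonneg A_rows z_pos, THEN less_imp_neq, symmetric])
  finally show ?thesis .
qed

lemma scaleT_one [simp]: "scaleT T 1 y = y"
  by (simp add: scaleT_def fun_eq_iff)

lemma scaleT_scaleT: "scaleT T \<alpha> (scaleT T \<beta> y) = scaleT T (\<alpha> * \<beta>) y"
  by (simp add: scaleT_def fun_eq_iff)

lemma scaleT_pos: "\<forall>j<n. y j > 0 \<Longrightarrow> \<alpha> > 0 \<Longrightarrow> \<forall>j<n. scaleT T \<alpha> y j > 0"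
  by (simp add: scaleT_def)

lemma row_sum_scaleT_bounds:
  fixes a y :: "nat \<Rightarrow> real"
  assumes "\<forall>k<n. 0 \<le> a k" and "\<forall>k<n. 0 \<le> y k" and "1 \<le> \<alpha>"
  shows "(\<Sum>k<n. a k * y k) \<le> (\<Sum>k<n. a k * scaleT T \<alpha> y k)"
    and "(\<Sum>k<n. a k * scaleT T \<alpha> y k) \<le> \<alpha> * (\<Sum>k<n. a k * y k)"
  using assms by (auto simp: scaleT_def sum_distrib_left mult_le_cancel_left1 mult_le_cancel_right1
      intro!: sum_mono mult_left_mono) (meson mult_nonneg_nonneg not_less)

lemma cAr_scaleT_ge_one:
  assumes A_nonneg: "\<forall>i<m. \<forall>j<n. A i j \<ge> 0"
    and A_rows: "\<forall>i<m. \<exists>j<n. A i j > 0"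
    and r_nonneg: "\<forall>i<m. r i \<ge> 0"
    and y_pos: "\<forall>j<n. y j > 0"
    and "1 \<le> \<alpha>" and "j < n"
  shows cAr_scaleT_ge_one_in: "j \<in> T \<Longrightarrow> cAr m n A r y j \<le> cAr m n A r (scaleT T \<alpha> y) j"
    and cAr_scaleT_ge_one_out: "j \<notin> T \<Longrightarrow> cAr m n A r (scaleT T \<alpha> y) j \<le> cAr m n A r y j"
proof -
  define S where "S z i = (\<Sum>k<n. A i k * z k)" for z i
  let ?y' = "scaleT T \<alpha> y"
  have S_pos: "0 < S y i" "0 < S ?y' i" if "i < m" for i
    unfolding S_def using that \<open>1 \<le> \<alpha>\<close>
    by (auto intro!: row_sum_pos[OF A_nonneg A_rows] y_pos scaleT_pos[OF y_pos])
  have S_bounds: "S y i \<le> S ?y' i" "S ?y' i \<le> \<alpha> * S y i" if "i < m" for i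
    unfolding S_def using that A_nonneg y_pos \<open>1 \<le> \<alpha>\<close>
    by (auto intro!: row_sum_scaleT_bounds simp: less_imp_le)
  have numerator_nonneg: "0 \<le> r i * (A i j * y j)" if "i < m" for i
    using that r_nonneg A_nonneg y_pos \<open>j < n\<close> by (simp add: less_imp_le)
  show "cAr m n A r y j \<le> cAr m n A r ?y' j" if "j \<in> T"
    unfolding cAr_def S_def[symmetric]
  proof (rule sum_mono)
    fix i assume "i \<in> {..<m}"
    then have "i < m" by simp
    have "r i * (A i j * y j) / S y i = \<alpha> * (r i * (A i j * y j)) / (\<alpha> * S y i)"
      using \<open>1 \<le> \<alpha>\<close> by simp
    also have "\<dots> \<le> \<alpha> * (r i * (A i j * y j)) / S ?y' i"
      using S_pos[OF \<open>i < m\<close>] S_bounds[OF \<open>i < m\<close>] numerator_nonneg[OF \<open>i < m\<close>] \<open>1 \<le> \<alpha>\<close>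
      by (intro divide_left_mono) auto
    also have "\<dots> = r i * (A i j * ?y' j) / S ?y' i"
      using \<open>j \<in> T\<close> by (simp add: scaleT_def algebra_simps)
    finally show "r i * (A i j * y j) / S y i \<le> r i * (A i j * ?y' j) / S ?y' i" .
  qed
  show "cAr m n A r ?y' j \<le> cAr m n A r y j" if "j \<notin> T"
    unfolding cAr_def S_def[symmetric]
  proof (rule sum_mono)
    fix i assume "i \<in> {..<m}"
    then show "r i * (A i j * ?y' j) / S ?y' i \<le> r i * (A i j * y j) / S y i"
      using S_pos S_bounds numerator_nonneg \<open>j \<notin> T\<close>
      by (simp add: scaleT_def divide_left_mono)
  qed
qed

lemma cAr_scaleT_le_one:
  assumes A_nonneg: "\<forall>i<m. \<forall>j<n. A i j \<ge> 0"
    and A_rows: "\<forall>i<m. \<exists>j<n. A i j > 0"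
    and r_nonneg: "\<forall>i<m. r i \<ge> 0"
    and y_pos: "\<forall>j<n. y j > 0"
    and "0 < \<alpha>" and "\<alpha> \<le> 1" and "j < n"
  shows "j \<in> T \<Longrightarrow> cAr m n A r (scaleT T \<alpha> y) j \<le> cAr m n A r y j"
    and "j \<notin> T \<Longrightarrow> cAr m n A r y j \<le> cAr m n A r (scaleT T \<alpha> y) j"
proof -
  let ?y' = "scaleT T \<alpha> y"
  have y'_pos: "\<forall>j<n. ?y' j > 0"
    using y_pos \<open>0 < \<alpha>\<close> by (rule scaleT_pos)
  have inverse_ge_one: "1 \<le> 1 / \<alpha>"
    using \<open>0 < \<alpha>\<close> \<open>\<alpha> \<le> 1\<close> by simp
  have scaleT_back: "scaleT T (1 / \<alpha>) ?y' = y"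
    using \<open>0 < \<alpha>\<close> by (simp add: scaleT_scaleT)
  note ge_one = cAr_scaleT_ge_one[OF A_nonneg A_rows r_nonneg y'_pos inverse_ge_one \<open>j < n\<close>,
      where T = T, unfolded scaleT_back]
  show "j \<in> T \<Longrightarrow> cAr m n A r ?y' j \<le> cAr m n A r y j"
    by (rule ge_one(1))
  show "j \<notin> T \<Longrightarrow> cAr m n A r y j \<le> cAr m n A r ?y' j"
    by (rule ge_one(2))
qed

lemma cAr_scaleT_sign_pattern:
  assumes A_nonneg: "\<forall>i<m. \<forall>j<n. A i j \<ge> 0"
    and A_rows: "\<forall>i<m. \<exists>j<n. A i j > 0"
    and r_nonneg: "\<forall>i<m. r i \<ge> 0"
    and y_pos: "\<forall>j<n. y j > 0"
    and T_sub: "T \<subseteq> {..<n}" and "0 < \<alpha>"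
    and h_mono: "proxy_h m n A r y T 1 \<le> proxy_h m n A r y T \<alpha>"
  shows "j \<in> T \<Longrightarrow> cAr m n A r y j \<le> cAr m n A r (scaleT T \<alpha> y) j"
    and "j \<in> {..<n} - T \<Longrightarrow> cAr m n A r (scaleT T \<alpha> y) j \<le> cAr m n A r y j"
proof -
  define d where "d j = cAr m n A r (scaleT T \<alpha> y) j - cAr m n A r y j" for j
  have unchanged: "\<forall>j<n. d j = 0" if "\<alpha> < 1"
  proof -
    note le_one = cAr_scaleT_le_one[OF A_nonneg A_rows r_nonneg y_pos \<open>0 < \<alpha>\<close>, of _ T]
    have finite_T: "finite T"
      using T_sub finite_subset by blast
    have "0 \<le> sum d T"
      using h_mono by (simp add: proxy_h_def d_def sum_subtractf)
    moreover have "\<forall>j\<in>T. d j \<le> 0"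
      using le_one(1) T_sub \<open>\<alpha> < 1\<close> by (auto simp: d_def)
    ultimately have d_T: "\<forall>j\<in>T. d j = 0"
      using sum_nonpos[of T d] sum_nonneg_eq_0_iff[OF finite_T, of "\<lambda>j. - d j"]
      by (simp add: sum_negf)
    have "sum d {..<n} = 0"
      using sum_cAr[OF A_nonneg A_rows y_pos] sum_cAr[OF A_nonneg A_rows scaleT_pos[OF y_pos \<open>0 < \<alpha>\<close>]]
      by (simp add: d_def sum_subtractf)
    then have "sum d ({..<n} - T) = 0"
      using d_T T_sub by (simp add: sum_diff)
    moreover have "\<forall>j\<in>{..<n} - T. 0 \<le> d j"
      using le_one(2) \<open>\<alpha> < 1\<close> by (auto simp: d_def)
    ultimately have "\<forall>j\<in>{..<n} - T. d j = 0"
      using sum_nonneg_eq_0_iff[of "{..<n} - T" d] by simp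
    with d_T show ?thesis
      by blast
  qed
  show "cAr m n A r y j \<le> cAr m n A r (scaleT T \<alpha> y) j" if "j \<in> T"
  proof (cases "1 \<le> \<alpha>")
    case True
    with that T_sub show ?thesis
      by (intro cAr_scaleT_ge_one_in[OF A_nonneg A_rows r_nonneg y_pos]) auto
  next
    case False
    with that T_sub unchanged show ?thesis
      by (auto simp: d_def)
  qed
  show "cAr m n A r (scaleT T \<alpha> y) j \<le> cAr m n A r y j" if "j \<in> {..<n} - T"
  proof (cases "1 \<le> \<alpha>")
    case True
    with that show ?thesis
      by (intro cAr_scaleT_ge_one_out[OF A_nonneg A_rows r_nonneg y_pos]) auto
  next
    case False
    with that unchanged show ?thesis
      by (auto simp: d_def)
  qed
qed

theorem lemma6p7:
  fixes m n :: nat and A :: "nat \<Rightarrow> nat \<Rightarrow> real" and r c y :: "nat \<Rightarrow> real"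
    and T :: "nat set" and \<gamma> \<alpha> :: real
  assumes A_nonneg: "\<forall>i<m. \<forall>j<n. A i j \<ge> 0"
    and A_rows: "\<forall>i<m. \<exists>j<n. A i j > 0"
    and r_nonneg: "\<forall>i<m. r i \<ge> 0"
    and c_nonneg: "\<forall>j<n. c j \<ge> 0"
    and y_pos: "\<forall>j<n. y j > 0"
    and T_sub: "T \<subseteq> {..<n}"
    and margin: "is_margin m n A r c y T \<gamma>"
    and \<alpha>_pos: "\<alpha> > 0"
    and h_lo: "0 \<le> proxy_h m n A r y T \<alpha> - proxy_h m n A r y T 1"
    and h_hi: "proxy_h m n A r y T \<alpha> - proxy_h m n A r y T 1 \<le> \<gamma>"
  shows "(\<Sum>j<n. (cAr m n A r y j - c j)^2)
           - (\<Sum>j<n. (cAr m n A r (scaleT T \<alpha> y) j - c j)^2)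
         \<ge> 2 * \<gamma> * (proxy_h m n A r y T \<alpha> - proxy_h m n A r y T 1)"
proof -
  define x where "x j = cAr m n A r y j - c j" for j
  define d where "d j = cAr m n A r (scaleT T \<alpha> y) j - cAr m n A r y j" for j
  obtain \<nu> where x_T: "\<forall>j\<in>T. x j \<le> \<nu> - \<gamma>" and x_not_T: "\<forall>j\<in>{..<n} - T. \<nu> + \<gamma> \<le> x j"
    using margin unfolding is_margin_def margin_feasible_def x_def by blast
  have sum_d_T: "sum d T = proxy_h m n A r y T \<alpha> - proxy_h m n A r y T 1"
    by (simp add: proxy_h_def d_def sum_subtractf)
  have "sum d {..<n} = 0"
    using sum_cAr[OF A_nonneg A_rows y_pos] sum_cAr[OF A_nonneg A_rows scaleT_pos[OF y_pos \<alpha>_pos]]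
    by (simp add: d_def sum_subtractf)
  moreover have "proxy_h m n A r y T 1 \<le> proxy_h m n A r y T \<alpha>"
    using h_lo by simp
  note signs = cAr_scaleT_sign_pattern[OF A_nonneg A_rows r_nonneg y_pos T_sub \<alpha>_pos this]
  ultimately have "(\<Sum>j<n. (x j)\<^sup>2) - (\<Sum>j<n. (x j + d j)\<^sup>2) \<ge> 2 * \<gamma> * sum d T"
    using T_sub x_T x_not_T h_lo h_hi unfolding sum_d_T[symmetric]
    by (intro sum_power2_decrease_by_margin) (auto simp: d_def)
  then show ?thesis
    unfolding sum_d_T by (simp add: x_def d_def)
qed

end
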